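(* Let $\mathcal{I}$ be an ideal on $\mathbf{N}$, $N=c_0(\mathcal{I})\cap\ell_\infty$, and $\nu:\mathcal{P}(\mathbf{N})\to\mathbf{R}$ an $\mathcal{I}$-invariant normalized capacity. Then the functional $V:\ell_\infty\to\mathbf{R}$, $V(x)=\int_{\mathbf{N}}x\,\mathrm{d}\nu$ (Choquet integral), is $N$-invariant: $V(x)=V(y)$ whenever $x,y\in\ell_\infty$ and $x-y\in N$.
   Context: An ideal on $\mathbf{N}$ is a family of subsets closed under subsets and finite unions, not containing $\mathbf{N}$, and containing all finite sets. $c_0(\mathcal{I})$ is the set of real sequences $x$ with $\{n:|x_n|\ge\varepsilon\}\in\mathcal{I}$ for all $\varepsilon>0$; $\ell_\infty$ is the space of bounded real sequences. A normalized capacity on $\mathcal{P}(\mathbf{N})$ is monotone with $\nu(\emptyset)=0$, $\nu(\mathbf{N})=1$; it is $\mathcal{I}$-invariant if $\nu(A)=\nu(B)$ whenever $A\triangle B\in\mathcal{I}$. Choquet integral: $\int x\,\mathrm{d}\nu=\int_0^\infty\nu(\{n:x_n\ge t\})\,\mathrm{d}t+\int_{-\infty}^0[\nu(\{n:x_n\ge t\})-1]\,\mathrm{d}t$. *)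

theory Defs
  imports "HOL-Analysis.Analysis"
begin

definition is_ideal :: "nat set set \<Rightarrow> bool" where
  "is_ideal I \<longleftrightarrow>
     (\<forall>A B. A \<in> I \<longrightarrow> B \<subseteq> A \<longrightarrow> B \<in> I) \<and>
     (\<forall>A B. A \<in> I \<longrightarrow> B \<in> I \<longrightarrow> A \<union> B \<in> I) \<and>
     UNIV \<notin> I \<and>
     (\<forall>A. finite A \<longrightarrow> A \<in> I)"

definition c0_ideal :: "nat set set \<Rightarrow> (nat \<Rightarrow> real) set" where
  "c0_ideal I = {x. \<forall>\<epsilon>>0. {n. \<bar>x n\<bar> \<ge> \<epsilon>} \<in> I}"

definition ell_infty :: "(nat \<Rightarrow> real) set" where
  "ell_infty = {x. bounded (range x)}"

definition normalized_capacity :: "(nat set \<Rightarrow> real) \<Rightarrow> bool" where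
  "normalized_capacity \<nu> \<longleftrightarrow>
     (\<forall>A B. A \<subseteq> B \<longrightarrow> \<nu> A \<le> \<nu> B) \<and> \<nu> {} = 0 \<and> \<nu> UNIV = 1"

definition ideal_invariant :: "nat set set \<Rightarrow> (nat set \<Rightarrow> real) \<Rightarrow> bool" where
  "ideal_invariant I \<nu> \<longleftrightarrow> (\<forall>A B. (A - B) \<union> (B - A) \<in> I \<longrightarrow> \<nu> A = \<nu> B)"

definition choquet :: "(nat set \<Rightarrow> real) \<Rightarrow> (nat \<Rightarrow> real) \<Rightarrow> real" where
  "choquet \<nu> x =
     (LBINT t:{0..}. \<nu> {n. x n \<ge> t}) + (LBINT t:{..<0}. \<nu> {n. x n \<ge> t} - 1)"

end

theory Submission
  imports Defs
begin

text \<open>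
  If \<open>x - y\<close> is \<open>I\<close>-null, then for every \<open>e > 0\<close> the upper level set \<open>{x \<ge> t}\<close> lies in
  \<open>{y \<ge> t - e}\<close> up to a set in \<open>I\<close>, so by \<open>I\<close>-invariance and monotonicity the decreasing
  distribution functions \<open>t \<mapsto> \<nu>{x \<ge> t}\<close> and \<open>t \<mapsto> \<nu>{y \<ge> t}\<close> dominate each other up to
  arbitrarily small shifts. Hence they agree at every common continuity point, i.e. outside a
  countable set, and so they have the same Lebesgue integrals over both half-lines.
\<close>

lemma normalized_capacity_mono:
  assumes "normalized_capacity \<nu>" and "A \<subseteq> B"
  shows "\<nu> A \<le> \<nu> B"
  using assms unfolding normalized_capacity_def by blast

lemma ideal_invariant_union_ideal:
  assumes "is_ideal I" and "ideal_invariant I \<nu>" and "E \<in> I"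
  shows "\<nu> (A \<union> E) = \<nu> A"
proof -
  have "((A \<union> E) - A) \<union> (A - (A \<union> E)) \<subseteq> E" by auto
  with assms(1,3) have "((A \<union> E) - A) \<union> (A - (A \<union> E)) \<in> I"
    unfolding is_ideal_def by blast
  with assms(2) show ?thesis unfolding ideal_invariant_def by blast
qed

lemma antimono_capacity_upper_level:
  fixes x :: "nat \<Rightarrow> real"
  assumes "normalized_capacity \<nu>"
  shows "antimono (\<lambda>t. \<nu> {n. x n \<ge> t})"
  by (rule antimonoI) (auto intro: normalized_capacity_mono[OF assms])

lemma capacity_upper_level_shift:
  assumes "is_ideal I" and "normalized_capacity \<nu>" and "ideal_invariant I \<nu>"
    and "(\<lambda>n. x n - y n) \<in> c0_ideal I" and "e > 0"
  shows "\<nu> {n. x n \<ge> t} \<le> \<nu> {n. y n \<ge> t - e}"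
proof -
  define E where "E = {n. \<bar>x n - y n\<bar> \<ge> e}"
  have "E \<in> I" using assms(4,5) unfolding c0_ideal_def E_def by auto
  have "{n. x n \<ge> t} \<subseteq> {n. y n \<ge> t - e} \<union> E"
    unfolding E_def by auto
  then have "\<nu> {n. x n \<ge> t} \<le> \<nu> ({n. y n \<ge> t - e} \<union> E)"
    by (rule normalized_capacity_mono[OF assms(2)])
  also have "\<dots> = \<nu> {n. y n \<ge> t - e}"
    by (rule ideal_invariant_union_ideal[OF assms(1,3) \<open>E \<in> I\<close>])
  finally show ?thesis .
qed

lemma le_at_isCont_if_le_shifts:
  fixes f g :: "real \<Rightarrow> real"
  assumes "\<And>e. e > 0 \<Longrightarrow> f t \<le> g (t - e)" and "isCont g t"
  shows "f t \<le> g t"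
proof -
  have "((\<lambda>e. t - e) \<longlongrightarrow> t) (at_right 0)"
    using tendsto_diff[OF tendsto_const[of t] tendsto_ident_at[of 0 "{0<..}"]] by simp
  then have "((\<lambda>e. g (t - e)) \<longlongrightarrow> g t) (at_right 0)"
    by (rule isCont_tendsto_compose[OF assms(2)])
  then show ?thesis
    by (rule tendsto_le[OF trivial_limit_at_right_real _ tendsto_const])
       (auto simp: eventually_at_right_field intro!: exI[of _ 1] assms(1))
qed

lemma mono_uminus_antimono:
  fixes f :: "'a::order \<Rightarrow> 'b::ordered_ab_group_add"
  assumes "antimono f"
  shows "mono (\<lambda>x. - f x)"
  by (rule monoI) (simp add: antimonoD[OF assms])

lemma countable_discontinuities_antimono:
  fixes f :: "real \<Rightarrow> real"
  assumes "antimono f"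
  shows "countable {a. \<not> isCont f a}"
proof (rule countable_subset)
  show "{a. \<not> isCont f a} \<subseteq> {a. \<not> isCont (\<lambda>t. - f t) a}"
    using isCont_minus[where f = "\<lambda>t. - f t"] by auto
  show "countable {a. \<not> isCont (\<lambda>t. - f t) a}"
    by (rule mono_ctble_discont[OF mono_uminus_antimono[OF assms]])
qed

lemma borel_measurable_antimono:
  fixes f :: "real \<Rightarrow> real"
  assumes "antimono f"
  shows "f \<in> borel_measurable borel"
  using borel_measurable_uminus[OF borel_measurable_mono[OF mono_uminus_antimono[OF assms]]]
  by simp

lemma AE_eq_if_antimono_shift_dominated:
  fixes f g :: "real \<Rightarrow> real"
  assumes "antimono f" and "antimono g"
    and "\<And>e t. e > 0 \<Longrightarrow> f t \<le> g (t - e)"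
    and "\<And>e t. e > 0 \<Longrightarrow> g t \<le> f (t - e)"
  shows "AE t in lborel. f t = g t"
proof -
  let ?D = "{a. \<not> isCont f a} \<union> {a. \<not> isCont g a}"
  have D: "countable ?D"
    using countable_discontinuities_antimono[OF assms(1)]
      countable_discontinuities_antimono[OF assms(2)] by simp
  have "\<forall>t. t \<notin> ?D \<longrightarrow> f t = g t"
  proof (intro allI impI)
    fix t assume "t \<notin> ?D"
    then have "isCont f t" and "isCont g t" by auto
    show "f t = g t"
      using le_at_isCont_if_le_shifts[of f t g, OF assms(3) \<open>isCont g t\<close>]
        le_at_isCont_if_le_shifts[of g t f, OF assms(4) \<open>isCont f t\<close>] by (rule order_antisym)
  qed
  then show ?thesis
    by (intro AE_I'[OF countable_imp_null_set_lborel[OF D]]) blast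
qed

theorem mainTheorem14:
  fixes I :: "nat set set" and \<nu> :: "nat set \<Rightarrow> real"
  assumes "is_ideal I"
    and "normalized_capacity \<nu>"
    and "ideal_invariant I \<nu>"
    and "x \<in> ell_infty" and "y \<in> ell_infty"
    and "(\<lambda>n. x n - y n) \<in> c0_ideal I \<inter> ell_infty"
  shows "choquet \<nu> x = choquet \<nu> y"
proof -
  let ?f = "\<lambda>t. \<nu> {n. x n \<ge> t}" and ?g = "\<lambda>t. \<nu> {n. y n \<ge> t}"
  have xy: "(\<lambda>n. x n - y n) \<in> c0_ideal I" using assms(6) by simp
  then have yx: "(\<lambda>n. y n - x n) \<in> c0_ideal I"
    unfolding c0_ideal_def by (simp add: abs_minus_commute)
  have anti: "antimono ?f" "antimono ?g"
    using antimono_capacity_upper_level[OF assms(2)] by blast+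
  have [measurable]: "?f \<in> borel_measurable borel" "?g \<in> borel_measurable borel"
    using anti by (auto intro: borel_measurable_antimono)
  have "AE t in lborel. ?f t = ?g t"
    using anti capacity_upper_level_shift[OF assms(1-3) xy] capacity_upper_level_shift[OF assms(1-3) yx]
    by (rule AE_eq_if_antimono_shift_dominated)
  then have "(LBINT t:{0..}. ?f t) = (LBINT t:{0..}. ?g t)"
    and "(LBINT t:{..<0}. ?f t - 1) = (LBINT t:{..<0}. ?g t - 1)"
    by (auto intro!: set_lebesgue_integral_cong_AE)
  then show ?thesis unfolding choquet_def by simp
qed

end
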